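(* Let $K$ be a finite field of characteristic $p$ and order $q$, let $s$ be a positive integer with $\gcd(s,q-1)=1$, and let $W=\sum_{u\in K^\times}W_u[u]\in L[K^\times]$. Then $|W|=q$ and $W\overline{W}=q^2[1]$. Equivalently, $\sum_{u\in K^\times}W_u=q$, and for every $c\in K^\times$, $\sum_{y\in K^\times}W_{cy}\overline{W_y}$ equals $q^2$ if $c=1$ and $0$ otherwise.
   Context: $\zeta=\exp(2\pi i/p)$, $\psi(x)=\zeta^{\mathrm{Tr}(x)}$ with $\mathrm{Tr}$ the absolute trace of $K$ to $\mathbb{F}_p$; $W_u=\sum_{x\in K}\psi(x^s-ux)$. $L=\mathbb{Q}(\zeta,\xi)$ with $\xi=\exp(2\pi i/(q-1))$, and $L[K^\times]$ is the group algebra of the multiplicative group $K^\times$ over $L$, whose elements are written $S=\sum_{u\in K^\times}S_u[u]$. For such $S$, $\overline{S}=\sum_{u}\overline{S_u}[u^{-1}]$ and $|S|=\sum_u S_u$. *)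

theory Defs
  imports "HOL-Analysis.Analysis"
begin

text \<open>K is modelled as a finite field type 'a. Its characteristic is CHAR('a) = p,
  its order CARD('a) = q = p^n.\<close>

definition ff_degree :: "'a::{field,finite} itself \<Rightarrow> nat" where
  "ff_degree _ = (THE n. CARD('a) = CHAR('a) ^ n)"

text \<open>Absolute trace K \<rightarrow> F_p (as an element of K, lying in the prime field).\<close>
definition abs_trace :: "'a::{field,finite} \<Rightarrow> 'a" where
  "abs_trace x = (\<Sum>i<ff_degree TYPE('a). x ^ (CHAR('a) ^ i))"

definition abs_trace_nat :: "'a::{field,finite} \<Rightarrow> nat" where
  "abs_trace_nat x = (THE k. k < CHAR('a) \<and> of_nat k = abs_trace x)"

definition psi :: "'a::{field,finite} \<Rightarrow> complex" where
  "psi x = exp (2 * pi * \<i> / of_nat CHAR('a)) ^ abs_trace_nat x"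

definition W :: "nat \<Rightarrow> 'a::{field,finite} \<Rightarrow> complex" where
  "W s u = (\<Sum>x\<in>UNIV. psi (x ^ s - u * x))"

end

(*
  psi is a nontrivial additive character of K, since the absolute trace is a polynomial of
  degree p^(n-1) < q and so does not vanish identically; hence sum_y psi(a y) is q if a = 0
  and 0 otherwise. Expanding W_u and summing over all u kills every x except x = 0, so
  sum_u W_u = q; likewise sum_y W_(cy) cnj(W_y) = q * sum_x psi((1 - c^s) x^s).
  When gcd(s, q - 1) = 1 the map x -> x^s permutes K. Hence W_0 = sum_x psi(x) = 0, so the
  sums over K - {0} agree with those over K, and sum_x psi((1 - c^s) x^s) = sum_x psi((1 - c^s) x),
  which is q if c^s = 1, i.e. c = 1, and 0 otherwise.
*)
theory Submission
  imports Defs "HOL-Algebra.Sylow" "HOL-Algebra.Multiplicative_Group"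
    "HOL-Computational_Algebra.Primes" "HOL-Number_Theory.Cong"
begin

section \<open>Finite fields\<close>

text \<open>Cauchy's theorem, read off from a Sylow subgroup of order \<open>r\<close>.\<close>

lemma (in group) exists_nontrivial_pow_prime_eq_one:
  assumes "finite (carrier G)" "prime r" "r dvd order G"
  obtains x where "x \<in> carrier G" "x \<noteq> \<one>" "x [^] r = \<one>"
proof -
  obtain m where "order G = r ^ 1 * m"
    using assms(3) by auto
  then obtain H where H: "subgroup H G" "card H = r"
    using sylow_thm[OF assms(2) is_group _ assms(1)] by (metis power_one_right)
  interpret H: group "G\<lparr>carrier := H\<rparr>"
    using subgroup.subgroup_is_group[OF H(1) is_group] .
  have "\<not> H \<subseteq> {\<one>}"
    using H(2) prime_gt_1_nat[OF assms(2)] card_mono[of "{\<one>}" H] by auto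
  then obtain x where x: "x \<in> H" "x \<noteq> \<one>" by blast
  have "x [^]\<^bsub>G\<lparr>carrier := H\<rparr>\<^esub> r = \<one>"
    using H.pow_order_eq_1[of x] x(1) H(2) by (simp add: order_def)
  then show ?thesis
    using that x subgroup.mem_carrier[OF H(1)] nat_pow_consistent by auto
qed

lemma prime_CHAR_finite_field: "prime CHAR('a::{field,finite})"
  by (intro prime_CHAR_semidom finite_imp_CHAR_pos) simp

definition additive_group :: "'a::ab_group_add monoid" where
  "additive_group = \<lparr>carrier = UNIV, mult = (+), one = 0\<rparr>"

lemma group_additive_group: "group additive_group"
  unfolding additive_group_def by (rule groupI) (auto simp: add.assoc intro: add.left_inverse)

lemma pow_additive_group: "x [^]\<^bsub>additive_group\<^esub> k = (of_nat k * x :: 'a::ring_1)"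
  by (induction k) (simp_all add: additive_group_def algebra_simps)

definition multiplicative_group :: "'a::field monoid" where
  "multiplicative_group = \<lparr>carrier = UNIV - {0}, mult = (*), one = 1\<rparr>"

lemma group_multiplicative_group: "group multiplicative_group"
  unfolding multiplicative_group_def
  by (rule groupI)
    (auto simp: mult.assoc,
     metis DiffI UNIV_I field_class.field_inverse inverse_nonzero_iff_nonzero singletonD)

lemma pow_multiplicative_group: "x [^]\<^bsub>multiplicative_group\<^esub> k = (x ^ k :: 'a::field)"
  by (induction k) (simp_all add: multiplicative_group_def)

lemma prime_dvd_card_finite_field_imp_eq_CHAR:
  assumes "prime r" "r dvd CARD('a::{field,finite})"
  shows "r = CHAR('a)"
proof -
  let ?A = "additive_group :: 'a monoid"
  have "finite (carrier ?A)" "order ?A = CARD('a)"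
    by (simp_all add: order_def additive_group_def)
  then obtain x
    where "x \<noteq> \<one>\<^bsub>?A\<^esub>" "x [^]\<^bsub>?A\<^esub> r = \<one>\<^bsub>?A\<^esub>"
    using group.exists_nontrivial_pow_prime_eq_one[OF group_additive_group _ assms(1)] assms(2)
    by metis
  then have "x \<noteq> 0" "of_nat r * x = 0"
    by (simp_all add: pow_additive_group) (simp_all add: additive_group_def)
  then have "CHAR('a) dvd r"
    by (simp add: of_nat_eq_0_iff_char_dvd)
  then show ?thesis
    using assms(1) prime_CHAR_finite_field primes_dvd_imp_eq by metis
qed

lemma card_finite_field_eq_CHAR_power: "\<exists>n. CARD('a::{field,finite}) = CHAR('a) ^ n"
proof (rule ccontr)
  assume "\<nexists>n. CARD('a) = CHAR('a) ^ n"
  then obtain r where "r \<in> prime_factors CARD('a)" "r \<noteq> CHAR('a)"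
    using Ex_other_prime_factor[of "CARD('a)" "CHAR('a)"] prime_CHAR_finite_field by auto
  then show False
    using prime_dvd_card_finite_field_imp_eq_CHAR by auto
qed

lemma card_eq_CHAR_power_ff_degree: "CARD('a::{field,finite}) = CHAR('a) ^ ff_degree TYPE('a)"
proof -
  obtain n where n: "CARD('a) = CHAR('a) ^ n"
    using card_finite_field_eq_CHAR_power by blast
  have "CHAR('a) > 1"
    using prime_gt_1_nat[OF prime_CHAR_finite_field] .
  then have "ff_degree TYPE('a) = n"
    unfolding ff_degree_def using n by (auto intro: the_equality)
  then show ?thesis
    using n by simp
qed

lemma ff_degree_pos: "ff_degree TYPE('a::{field,finite}) > 0"
proof (rule ccontr)
  assume "\<not> ff_degree TYPE('a) > 0"
  then have "CARD('a) = 1"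
    using card_eq_CHAR_power_ff_degree[where 'a='a] by simp
  moreover have "card {0, 1::'a} \<le> CARD('a)"
    by (rule card_mono) simp_all
  ultimately show False
    by simp
qed

lemma power_card_minus_one_eq_one:
  assumes "(x::'a::{field,finite}) \<noteq> 0"
  shows "x ^ (CARD('a) - 1) = 1"
proof -
  have "order (multiplicative_group :: 'a monoid) = CARD('a) - 1"
    by (simp add: order_def multiplicative_group_def card_Diff_singleton)
  then show ?thesis
    using group.pow_order_eq_1[OF group_multiplicative_group, of x] assms
    by (simp add: pow_multiplicative_group) (simp add: multiplicative_group_def)
qed

lemma power_card_finite_field: "(x::'a::{field,finite}) ^ CARD('a) = x"
proof (cases "x = 0")
  case False
  have "x ^ CARD('a) = x * x ^ (CARD('a) - 1)"
    by (simp flip: power_Suc)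
  then show ?thesis
    using power_card_minus_one_eq_one[OF False] by simp
qed simp

section \<open>The absolute trace\<close>

lemma abs_trace_add: "abs_trace (x + y :: 'a::{field,finite}) = abs_trace x + abs_trace y"
  unfolding abs_trace_def
  by (simp add: sum.distrib freshmans_dream'[OF prime_CHAR_finite_field refl])

lemma abs_trace_zero: "abs_trace (0 :: 'a::{field,finite}) = 0"
  using abs_trace_add[of "0::'a" 0] by (metis add_0 add_cancel_right_right)

lemma abs_trace_power_CHAR: "abs_trace (x :: 'a::{field,finite}) ^ CHAR('a) = abs_trace x"
proof -
  let ?n = "ff_degree TYPE('a)" and ?f = "\<lambda>i. x ^ (CHAR('a) ^ i)"
  have "abs_trace x ^ CHAR('a) = (\<Sum>i<?n. ?f (Suc i))"
    unfolding abs_trace_def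
    by (simp add: freshmans_dream_sum[OF prime_CHAR_finite_field refl] mult.commute
        flip: power_mult)
  also have "\<dots> = (\<Sum>i<Suc ?n. ?f i) - ?f 0"
    by (subst sum.lessThan_Suc_shift) simp
  also have "\<dots> = abs_trace x"
    using power_card_finite_field[of x]
    by (simp add: abs_trace_def flip: card_eq_CHAR_power_ff_degree)
  finally show ?thesis .
qed

lemma of_nat_power_CHAR:
  assumes "prime CHAR('a::comm_semiring_1)"
  shows "(of_nat k :: 'a) ^ CHAR('a) = of_nat k"
proof (induction k)
  case (Suc k)
  then show ?case
    using freshmans_dream[OF assms refl, of "of_nat k" 1] by (simp add: add.commute)
qed (use prime_gt_0_nat[OF assms] in \<open>simp add: power_0_left\<close>)

lemma CHAR_power_fixed_imp_of_nat:
  fixes t :: "'a::idom"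
  assumes "prime CHAR('a)" "t ^ CHAR('a) = t"
  shows "t \<in> of_nat ` {..<CHAR('a)}"
proof -
  let ?p = "CHAR('a)"
  define P :: "'a poly" where "P = Polynomial.monom 1 ?p - [:0, 1:]"
  have "?p \<ge> 2"
    using prime_ge_2_nat[OF assms(1)] .
  then have "degree P = ?p"
    unfolding P_def diff_conv_add_uminus by (subst degree_add_eq_left) (auto simp: degree_monom_eq)
  then have "P \<noteq> 0"
    using \<open>?p \<ge> 2\<close> by auto
  then have "card {x. poly P x = 0} \<le> ?p"
    using card_poly_roots_bound[of P] \<open>degree P = ?p\<close> by simp
  moreover have "inj_on (of_nat :: nat \<Rightarrow> 'a) {..<?p}"
    by (auto intro!: inj_onI simp: of_nat_eq_iff_cong_CHAR cong_less_modulus_unique_nat)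
  then have "card (of_nat ` {..<?p} :: 'a set) = ?p"
    by (simp add: card_image)
  moreover have roots: "{x. poly P x = 0} = {x. x ^ ?p = x}"
    by (auto simp: P_def poly_monom)
  moreover have "of_nat ` {..<?p} \<subseteq> {x::'a. x ^ ?p = x}"
    using of_nat_power_CHAR[OF assms(1)] by auto
  ultimately have "of_nat ` {..<?p} = {x::'a. x ^ ?p = x}"
    using poly_roots_finite[OF \<open>P \<noteq> 0\<close>] by (intro card_seteq) auto
  then show ?thesis
    using assms(2) by blast
qed

lemma of_nat_abs_trace_nat: "of_nat (abs_trace_nat x) = abs_trace (x :: 'a::{field,finite})"
proof -
  have "abs_trace x \<in> of_nat ` {..<CHAR('a)}"
    by (rule CHAR_power_fixed_imp_of_nat[OF prime_CHAR_finite_field abs_trace_power_CHAR])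
  then obtain k where k: "k < CHAR('a)" "of_nat k = abs_trace x"
    by auto
  have "j = k" if "j < CHAR('a)" "of_nat j = abs_trace x" for j
    using that k cong_less_modulus_unique_nat of_nat_eq_iff_cong_CHAR[where 'a='a] by metis
  then have "abs_trace_nat x = k"
    unfolding abs_trace_nat_def using k by (intro the_equality) blast+
  then show ?thesis
    using k by simp
qed

text \<open>The trace is a nonzero polynomial of degree \<open>p ^ (n - 1) < q\<close>.\<close>

lemma abs_trace_not_identically_zero: "\<exists>x::'a::{field,finite}. abs_trace x \<noteq> 0"
proof (rule ccontr)
  let ?p = "CHAR('a)" and ?n = "ff_degree TYPE('a)"
  define Q :: "'a poly" where "Q = (\<Sum>i<?n. Polynomial.monom 1 (?p ^ i))"
  assume "\<nexists>x::'a. abs_trace x \<noteq> 0"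
  then have "{x. poly Q x = 0} = UNIV"
    by (auto simp: Q_def poly_sum poly_monom abs_trace_def)
  have p: "?p > 1" and n: "?n > 0"
    using prime_gt_1_nat[OF prime_CHAR_finite_field] ff_degree_pos by auto
  have "Polynomial.coeff Q (?p ^ (?n - 1)) = (\<Sum>i\<in>{?n - 1}. 1)"
    unfolding Q_def coeff_sum coeff_monom
    using p n by (intro sum.mono_neutral_cong_right) auto
  then have "Q \<noteq> 0"
    by auto
  have "degree Q \<le> ?p ^ (?n - 1)"
    unfolding Q_def
    by (intro degree_sum_le order.trans[OF degree_monom_le] power_increasing) (use p in auto)
  then have "CARD('a) \<le> ?p ^ (?n - 1)"
    using card_poly_roots_bound[OF \<open>Q \<noteq> 0\<close>] \<open>{x. poly Q x = 0} = UNIV\<close>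
    by simp
  moreover have "?p ^ (?n - 1) < CARD('a)"
    using p n by (simp add: card_eq_CHAR_power_ff_degree)
  ultimately show False
    by simp
qed

section \<open>The additive character\<close>

lemma root_unity_power_eq_iff:
  assumes "n > 0"
  shows "exp (2 * pi * \<i> / of_nat n) ^ j = exp (2 * pi * \<i> / of_nat n) ^ k
    \<longleftrightarrow> [j = k] (mod n)"
proof -
  have "exp (2 * pi * \<i> / of_nat n) ^ m = exp (2 * of_real pi * \<i> * of_nat m / of_nat n)"
    for m
    by (subst exp_of_nat_mult [symmetric]) (simp add: mult_ac)
  then show ?thesis
    using complex_root_unity_eq[of n j k] assms by (simp add: cong_def)
qed

lemma psi_eq_root_power:
  assumes "of_nat k = abs_trace (x::'a::{field,finite})"
  shows "psi x = exp (2 * pi * \<i> / of_nat CHAR('a)) ^ k"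
proof -
  have "[abs_trace_nat x = k] (mod CHAR('a))"
    using assms of_nat_abs_trace_nat[of x] of_nat_eq_iff_cong_CHAR[where 'a='a] by metis
  then show ?thesis
    unfolding psi_def
    using root_unity_power_eq_iff[OF prime_gt_0_nat[OF prime_CHAR_finite_field]] by blast
qed

lemma psi_zero: "psi (0::'a::{field,finite}) = 1"
  using psi_eq_root_power[of 0 "0::'a"] by (simp add: abs_trace_zero)

lemma psi_add: "psi (x + y :: 'a::{field,finite}) = psi x * psi y"
proof -
  have "psi (x + y) = exp (2 * pi * \<i> / of_nat CHAR('a)) ^ (abs_trace_nat x + abs_trace_nat y)"
    by (rule psi_eq_root_power) (simp add: abs_trace_add of_nat_abs_trace_nat)
  then show ?thesis
    by (simp add: psi_def power_add)
qed

lemma psi_eq_1_iff: "psi (x::'a::{field,finite}) = 1 \<longleftrightarrow> abs_trace x = 0"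
proof -
  have "psi x = 1 \<longleftrightarrow> [abs_trace_nat x = 0] (mod CHAR('a))"
    using root_unity_power_eq_iff[OF prime_gt_0_nat[OF prime_CHAR_finite_field],
        of "abs_trace_nat x" 0]
    by (simp add: psi_def)
  also have "\<dots> \<longleftrightarrow> abs_trace x = 0"
    using of_nat_eq_iff_cong_CHAR[where 'a='a, of "abs_trace_nat x" 0]
    by (simp add: of_nat_abs_trace_nat)
  finally show ?thesis .
qed

lemma norm_psi: "norm (psi x) = 1"
  by (simp add: psi_def norm_power norm_exp)

lemma cnj_psi: "cnj (psi x) = psi (- x :: 'a::{field,finite})"
proof -
  have "psi x * cnj (psi x) = 1"
    using norm_psi[of x] by (simp add: complex_norm_square[symmetric])
  moreover have "psi x * psi (- x) = 1"
    using psi_add[of x "- x"] by (simp add: psi_zero)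
  ultimately show ?thesis
    by (metis mult.left_commute mult.right_neutral mult.commute)
qed

lemma sum_psi: "(\<Sum>x\<in>UNIV. psi (x::'a::{field,finite})) = 0"
proof -
  obtain y :: 'a where "abs_trace y \<noteq> 0"
    using abs_trace_not_identically_zero by blast
  then have "psi y \<noteq> 1"
    by (simp add: psi_eq_1_iff)
  have "(\<Sum>x\<in>UNIV. psi (x::'a)) = (\<Sum>x\<in>UNIV. psi (x + y))"
    by (rule sum.reindex_bij_witness[of _ "\<lambda>x. x + y" "\<lambda>x. x - y"]) auto
  also have "\<dots> = psi y * (\<Sum>x\<in>UNIV. psi (x::'a))"
    by (simp add: psi_add sum_distrib_left mult.commute)
  finally show ?thesis
    using \<open>psi y \<noteq> 1\<close> by (metis mult_cancel_right1 mult.commute)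
qed

lemma sum_psi_mult:
  "(\<Sum>x\<in>UNIV. psi (a * x :: 'a::{field,finite})) = (if a = 0 then of_nat CARD('a) else 0)"
proof (cases "a = 0")
  case False
  have "(\<Sum>x\<in>UNIV. psi (a * x)) = (\<Sum>x\<in>UNIV. psi (x::'a))"
    by (rule sum.reindex_bij_witness[of _ "\<lambda>x. x / a" "\<lambda>x. a * x"])
      (use False in auto)
  then show ?thesis
    using False by (simp add: sum_psi)
qed (simp add: psi_zero)

lemma psi_diff: "psi (x - y :: 'a::{field,finite}) = psi x * psi (- y)"
  using psi_add[of x "- y"] by simp

section \<open>Weil sums of a permutation monomial\<close>

lemma bij_power_coprime_card_minus_one:
  assumes "s > 0" "coprime s (CARD('a::{field,finite}) - 1)"
  shows "bij (\<lambda>x::'a. x ^ s)"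
proof -
  obtain u v where uv: "s * u = (CARD('a) - 1) * v + 1"
    using bezout_nat[of s "CARD('a) - 1"] assms by (auto simp: coprime_iff_gcd_eq_1)
  have "(x ^ s) ^ u = x" for x :: 'a
  proof (cases "x = 0")
    case False
    have "(x ^ s) ^ u = (x ^ (CARD('a) - 1)) ^ v * x"
      by (simp flip: power_mult add: uv power_add)
    then show ?thesis
      using power_card_minus_one_eq_one[OF False] by simp
  qed (simp add: uv flip: power_mult)
  then have "inj (\<lambda>x::'a. x ^ s)"
    by (metis injI)
  then show ?thesis
    by (simp add: bij_def finite_UNIV_inj_surj)
qed

lemma sum_power_coprime_card_minus_one:
  assumes "s > 0" "coprime s (CARD('a::{field,finite}) - 1)"
  shows "(\<Sum>x\<in>UNIV. f (x ^ s)) = (\<Sum>x\<in>UNIV. f (x::'a))"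
  using sum.reindex_bij_betw[OF bij_power_coprime_card_minus_one[OF assms], of f] by simp

lemma sum_W:
  assumes "s > 0"
  shows "(\<Sum>u\<in>UNIV. W s (u::'a::{field,finite})) = of_nat CARD('a)"
proof -
  have orth: "(\<Sum>u\<in>UNIV. psi (- (u * x))) = (if x = 0 then of_nat CARD('a) else 0)"
    for x :: 'a
    using sum_psi_mult[of "- x"] by (simp add: mult.commute)
  have "(\<Sum>u\<in>UNIV. W s (u::'a))
      = (\<Sum>x\<in>UNIV. psi ((x::'a) ^ s) * (\<Sum>u\<in>UNIV. psi (- (u * x))))"
    unfolding W_def by (subst sum.swap) (simp add: psi_diff sum_distrib_left)
  also have "\<dots> = psi ((0::'a) ^ s) * of_nat CARD('a)"
    by (simp add: orth if_distrib cong: if_cong)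
  finally show ?thesis
    using assms by (simp add: psi_zero power_0_left)
qed

lemma W_zero:
  assumes "s > 0" "coprime s (CARD('a::{field,finite}) - 1)"
  shows "W s (0::'a) = 0"
  using sum_power_coprime_card_minus_one[OF assms, of psi] by (simp add: W_def sum_psi)

lemma W_mult_cnj_W:
  "W s (c * y) * cnj (W s y)
     = (\<Sum>x\<in>UNIV. \<Sum>z\<in>UNIV. psi (x ^ s - z ^ s) * psi ((z - c * x) * y))"
proof -
  have "psi (x ^ s - c * y * x) * psi (- (z ^ s - y * z))
      = psi (x ^ s - z ^ s) * psi ((z - c * x) * y)" for x z :: 'a
  proof -
    have "x ^ s - c * y * x + - (z ^ s - y * z) = (x ^ s - z ^ s) + (z - c * x) * y"
      by (simp add: algebra_simps)
    then show ?thesis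
      by (metis psi_add)
  qed
  then show ?thesis
    by (simp add: W_def cnj_sum cnj_psi sum_product)
qed

lemma sum_W_mult_cnj_W:
  "(\<Sum>y\<in>UNIV. W s (c * y) * cnj (W s y))
     = of_nat CARD('a) * (\<Sum>x\<in>UNIV. psi ((1 - c ^ s) * x ^ s :: 'a::{field,finite}))"
proof -
  have "(\<Sum>y\<in>UNIV. W s (c * y) * cnj (W s y))
      = (\<Sum>y\<in>UNIV. \<Sum>x\<in>UNIV. \<Sum>z\<in>UNIV.
          psi (x ^ s - z ^ s) * psi ((z - c * x) * y))"
    by (simp only: W_mult_cnj_W)
  also have "\<dots> = (\<Sum>x\<in>UNIV. \<Sum>z\<in>UNIV.
      psi (x ^ s - z ^ s) * (\<Sum>y\<in>UNIV. psi ((z - c * x) * y)))"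
    by (subst sum.swap) (rule sum.cong[OF refl], subst sum.swap, simp only: sum_distrib_left)
  also have "\<dots> = (\<Sum>x\<in>UNIV. psi (x ^ s - (c * x) ^ s) * of_nat CARD('a))"
    by (simp add: sum_psi_mult if_distrib sum.delta cong: if_cong)
  also have "\<dots> = of_nat CARD('a) * (\<Sum>x\<in>UNIV. psi ((1 - c ^ s) * x ^ s))"
    by (simp add: sum_distrib_left power_mult_distrib right_diff_distrib mult.commute)
  finally show ?thesis .
qed

lemma sum_nonzero_W:
  assumes "s > 0" "coprime s (CARD('a::{field,finite}) - 1)"
  shows "(\<Sum>u\<in>UNIV - {0::'a}. W s u) = of_nat CARD('a)"
  using sum.remove[of UNIV "0::'a" "W s"] sum_W[OF assms(1), where 'a='a] W_zero[OF assms]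
  by simp

lemma sum_nonzero_W_mult_cnj_W:
  assumes "s > 0" "coprime s (CARD('a::{field,finite}) - 1)"
  shows "(\<Sum>y\<in>UNIV - {0::'a}. W s (c * y) * cnj (W s y))
    = (if c = 1 then of_nat (CARD('a) ^ 2) else 0)"
proof -
  have "c ^ s = 1 \<longleftrightarrow> c = 1"
    using bij_is_inj[OF bij_power_coprime_card_minus_one[OF assms]] by (metis inj_eq power_one)
  have "(\<Sum>y\<in>UNIV - {0::'a}. W s (c * y) * cnj (W s y))
      = (\<Sum>y\<in>UNIV. W s (c * y) * cnj (W s y))"
    using sum.remove[of UNIV "0::'a" "\<lambda>y. W s (c * y) * cnj (W s y)"] W_zero[OF assms]
    by simp
  also have "\<dots> = of_nat CARD('a) * (\<Sum>x\<in>UNIV. psi ((1 - c ^ s) * x))"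
    using sum_power_coprime_card_minus_one[OF assms, of "\<lambda>t. psi ((1 - c ^ s) * t)"]
    by (simp add: sum_W_mult_cnj_W)
  finally show ?thesis
    using \<open>c ^ s = 1 \<longleftrightarrow> c = 1\<close>
    by (simp add: sum_psi_mult power2_eq_square)
qed

theorem lemma5p8:
  fixes s :: nat
  assumes "s > 0"
    and "coprime s (CARD('a::{field,finite}) - 1)"
  shows "(\<Sum>u\<in>UNIV - {0::'a}. W s u) = of_nat CARD('a)
       \<and> (\<forall>c::'a. c \<noteq> 0 \<longrightarrow>
            (\<Sum>y\<in>UNIV - {0::'a}. W s (c * y) * cnj (W s y))
              = (if c = 1 then of_nat (CARD('a) ^ 2) else 0))"
  using sum_nonzero_W[OF assms] sum_nonzero_W_mult_cnj_W[OF assms] by blast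

end
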